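(* Let $K$ be a metrizable compact Hausdorff space, $\varphi$ a continuous open map of $K$ onto itself, $w\in C(K)$, and let $T$ be the operator on $C(K)$ defined by $(Tf)(k)=w(k)f(\varphi(k))$, $f\in C(K)$, $k\in K$. Then the following are equivalent: (1) $0\in\sigma_{a.p.}(T)$; (2) there is $k\in K$ such that $w\equiv0$ on $\varphi^{-1}(\{k\})$.
   Context: $C(K)$ carries the sup norm. $\sigma_{a.p.}(T)$ is the set of $\lambda$ for which there are $f_n\in C(K)$, $\|f_n\|=1$, with $Tf_n-\lambda f_n\to0$. *)

theory Defs
  imports "HOL-Analysis.Analysis"
begin

text \<open>Sup norm on C(K), K a subset of a metric space (hence metrizable).
  The extra 0 only matters for K empty (then the norm is 0) and makes Sup well-behaved.\<close>
definition supnorm :: "'a set \<Rightarrow> ('a \<Rightarrow> complex) \<Rightarrow> real" where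
  "supnorm K f = Sup (insert 0 ((\<lambda>k. norm (f k)) ` K))"

definition ap_spectrum ::
  "'a::topological_space set \<Rightarrow> (('a \<Rightarrow> complex) \<Rightarrow> ('a \<Rightarrow> complex)) \<Rightarrow> complex set" where
  "ap_spectrum K T = {c. \<exists>fs :: nat \<Rightarrow> 'a \<Rightarrow> complex.
      (\<forall>n. continuous_on K (fs n) \<and> supnorm K (fs n) = 1) \<and>
      (\<lambda>n. supnorm K (\<lambda>k. T (fs n) k - c * fs n k)) \<longlonglongrightarrow> 0}"

definition open_map_on :: "'a::topological_space set \<Rightarrow> ('a \<Rightarrow> 'a) \<Rightarrow> bool" where
  "open_map_on K \<phi> \<longleftrightarrow> (\<forall>U. openin (top_of_set K) U \<longrightarrow> openin (top_of_set K) (\<phi> ` U))"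

end

theory Submission
  imports Defs
begin

text \<open>If \<open>w\<close> does not vanish identically on any fibre of \<open>\<phi>\<close>, then, because \<open>\<phi>\<close> is open,
  the sets \<open>\<phi> ` {x. \<bar>w x\<bar> > t}\<close> form an open cover of \<open>K\<close>; by compactness one \<open>t > 0\<close> works
  for every fibre. Then \<open>\<parallel>T f\<parallel> \<ge> t \<parallel>f\<parallel>\<close>, so \<open>T\<close> is bounded below and \<open>0\<close> is not an
  approximate eigenvalue. Conversely, if \<open>w\<close> vanishes on the fibre over \<open>k\<close>, it is small on the
  preimage of a small ball around \<open>k\<close>, so normalised peaks at \<open>k\<close> of shrinking support are
  mapped by \<open>T\<close> to functions tending to \<open>0\<close>; this direction does not need \<open>\<phi>\<close> to be open.\<close>

lemma supnorm_least:
  assumes "\<And>k. k \<in> K \<Longrightarrow> norm (f k) \<le> c" "0 \<le> c"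
  shows "supnorm K f \<le> c"
  unfolding supnorm_def using assms by (intro cSup_least) auto

lemma norm_le_supnorm:
  assumes "bdd_above ((\<lambda>k. norm (f k)) ` K)" "k \<in> K"
  shows "norm (f k) \<le> supnorm K f"
  unfolding supnorm_def using assms by (intro cSup_upper) auto

lemma supnorm_nonneg:
  assumes "bdd_above ((\<lambda>k. norm (f k)) ` K)"
  shows "0 \<le> supnorm K f"
  unfolding supnorm_def using assms by (intro cSup_upper) auto

lemma bdd_above_norm_image_compact:
  fixes f :: "'a::topological_space \<Rightarrow> 'b::real_normed_vector"
  assumes "compact K" "continuous_on K f"
  shows "bdd_above ((\<lambda>k. norm (f k)) ` K)"
  using assms by (simp add: bounded_norm_comp bounded_imp_bdd_above
      compact_imp_bounded compact_continuous_image)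

lemma zero_notin_ap_spectrum_if_bounded_below:
  assumes "\<delta> > 0" and below: "\<And>f. continuous_on K f \<Longrightarrow> \<delta> * supnorm K f \<le> supnorm K (T f)"
  shows "0 \<notin> ap_spectrum K T"
proof
  assume "0 \<in> ap_spectrum K T"
  then obtain fs where cont: "\<And>n. continuous_on K (fs n)" and unit: "\<And>n. supnorm K (fs n) = 1"
    and lim: "(\<lambda>n. supnorm K (T (fs n))) \<longlonglongrightarrow> 0"
    unfolding ap_spectrum_def by auto
  then obtain n where "supnorm K (T (fs n)) < \<delta>"
    using order_tendstoD(2)[OF lim \<open>\<delta> > 0\<close>] by (meson eventually_sequentially order_refl)
  moreover have "\<delta> \<le> supnorm K (T (fs n))"
    using below[OF cont] unit by (metis mult.right_neutral)
  ultimately show False by simp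
qed

lemma open_map_fibrewise_lower_bound:
  fixes g :: "'a::topological_space \<Rightarrow> real"
  assumes "compact K" "open_map_on K \<phi>" "continuous_on K g"
    and pos: "\<forall>y\<in>K. \<exists>x\<in>K. \<phi> x = y \<and> 0 < g x"
  shows "\<exists>\<delta>>0. \<forall>y\<in>K. \<exists>x\<in>K. \<phi> x = y \<and> \<delta> < g x"
proof -
  define U where "U n = \<phi> ` {x\<in>K. 1 / real (Suc n) < g x}" for n
  have "openin (top_of_set K) {x\<in>K. 1 / real (Suc n) < g x}" for n
    using continuous_openin_preimage_gen[OF assms(3) open_greaterThan, of "1 / real (Suc n)"]
    by (simp add: vimage_def Int_def)
  then have U_open: "openin (top_of_set K) (U n)" for n
    using assms(2) unfolding open_map_on_def U_def by blast
  have U_mono: "U m \<subseteq> U n" if "m \<le> n" for m n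
  proof -
    have "1 / real (Suc n) \<le> 1 / real (Suc m)" using that by (simp add: frac_le)
    then show ?thesis unfolding U_def by force
  qed
  have "K \<subseteq> \<Union>(range U)"
  proof
    fix y assume "y \<in> K"
    then obtain x where x: "x \<in> K" "\<phi> x = y" "0 < g x" using pos by blast
    then obtain n where "1 / real (Suc n) < g x" using nat_approx_posE by blast
    then show "y \<in> \<Union>(range U)" using x unfolding U_def by blast
  qed
  then obtain D where "D \<subseteq> range U" "finite D" "K \<subseteq> \<Union>D"
    using assms(1) U_open unfolding compact_eq_openin_cover by (metis rangeE)
  then obtain G where G: "finite G" "K \<subseteq> \<Union>(U ` G)"
    using finite_subset_image[of D U UNIV] by blast
  define N where "N = Max (insert 0 G)"
  have "U n \<subseteq> U N" if "n \<in> G" for n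
    using U_mono G(1) that unfolding N_def by simp
  with G(2) have "K \<subseteq> U N" by blast
  then show ?thesis unfolding U_def by (intro exI[of _ "1 / real (Suc N)"]) force
qed

lemma weighted_composition_bounded_below:
  fixes w f :: "'a::topological_space \<Rightarrow> complex"
  assumes "compact K" "continuous_on K \<phi>" "\<phi> ` K \<subseteq> K" "continuous_on K w" "continuous_on K f"
    and "\<delta> > 0" and fibres: "\<forall>y\<in>K. \<exists>x\<in>K. \<phi> x = y \<and> \<delta> < norm (w x)"
  shows "\<delta> * supnorm K f \<le> supnorm K (\<lambda>k. w k * f (\<phi> k))"
proof -
  have "continuous_on K (f \<circ> \<phi>)"
    using assms(2,3,5) by (metis continuous_on_compose continuous_on_subset)
  then have "continuous_on K (\<lambda>k. w k * f (\<phi> k))"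
    using assms(4) by (simp add: o_def continuous_on_mult)
  then have bdd: "bdd_above ((\<lambda>k. norm (w k * f (\<phi> k))) ` K)"
    by (rule bdd_above_norm_image_compact[OF assms(1)])
  have "supnorm K f \<le> supnorm K (\<lambda>k. w k * f (\<phi> k)) / \<delta>"
  proof (rule supnorm_least)
    fix y assume "y \<in> K"
    then obtain x where x: "x \<in> K" "\<phi> x = y" "\<delta> < norm (w x)" using fibres by blast
    have "\<delta> * norm (f y) \<le> norm (w x) * norm (f y)"
      using x(3) by (intro mult_right_mono) auto
    also have "\<dots> \<le> supnorm K (\<lambda>k. w k * f (\<phi> k))"
      using norm_le_supnorm[OF bdd x(1)] x(2) by (simp add: norm_mult)
    finally show "norm (f y) \<le> supnorm K (\<lambda>k. w k * f (\<phi> k)) / \<delta>"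
      using \<open>\<delta> > 0\<close> by (simp add: field_simps)
  qed (use supnorm_nonneg[OF bdd] \<open>\<delta> > 0\<close> in simp)
  then show ?thesis using \<open>\<delta> > 0\<close> by (simp add: field_simps)
qed

lemma weight_small_near_vanishing_fibre:
  fixes w :: "'a::metric_space \<Rightarrow> 'b::real_normed_vector"
  assumes "compact K" "continuous_on K \<phi>" "continuous_on K w"
    and vanish: "\<forall>x\<in>K. \<phi> x = k \<longrightarrow> w x = 0" and "r > 0"
  shows "\<exists>e>0. \<forall>x\<in>K. dist (\<phi> x) k < e \<longrightarrow> norm (w x) < r"
proof -
  define C where "C = {x\<in>K. r \<le> norm (w x)}"
  have "closedin (top_of_set K) C"
    using continuous_closedin_preimage[OF continuous_on_norm[OF assms(3)] closed_atLeast, of r]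
    by (simp add: C_def vimage_def Int_def)
  then have "compact (\<phi> ` C)"
    using assms(1,2) closedin_compact closedin_imp_subset
    by (metis compact_continuous_image continuous_on_subset)
  moreover have "k \<notin> \<phi> ` C"
    using vanish \<open>r > 0\<close> unfolding C_def by auto
  ultimately obtain e where "e > 0" "ball k e \<subseteq> - \<phi> ` C"
    by (metis compact_imp_closed open_Compl open_contains_ball ComplI)
  then show ?thesis
    unfolding C_def by (intro exI[of _ e]) (force simp: dist_commute)
qed

definition peak :: "'a::metric_space \<Rightarrow> nat \<Rightarrow> 'a \<Rightarrow> complex" where
  "peak k n y = of_real (max 0 (1 - real (Suc n) * dist y k))"

lemma norm_peak_le_one: "norm (peak k n y) \<le> 1"
  unfolding peak_def by auto

lemma peak_eq_zero:
  assumes "1 / real (Suc n) \<le> dist y k"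
  shows "peak k n y = 0"
proof -
  have "1 \<le> real (Suc n) * dist y k" using assms by (simp add: field_simps)
  then show ?thesis unfolding peak_def by simp
qed

lemma continuous_on_peak: "continuous_on K (peak k n)"
  unfolding peak_def by (intro continuous_intros)

lemma supnorm_peak:
  assumes "k \<in> K"
  shows "supnorm K (peak k n) = 1"
proof (rule antisym)
  show "supnorm K (peak k n) \<le> 1"
    by (rule supnorm_least) (simp_all add: norm_peak_le_one)
  have "norm (peak k n k) \<le> supnorm K (peak k n)"
    using norm_le_supnorm[OF bdd_aboveI2[OF norm_peak_le_one] assms] .
  then show "1 \<le> supnorm K (peak k n)" by (simp add: peak_def)
qed

lemma weighted_composition_peak_tendsto_zero:
  fixes K :: "'a::metric_space set" and w :: "'a \<Rightarrow> complex"
  assumes "compact K" "continuous_on K \<phi>" "continuous_on K w"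
    and "\<forall>x\<in>K. \<phi> x = k \<longrightarrow> w x = 0"
  shows "(\<lambda>n. supnorm K (\<lambda>x. w x * peak k n (\<phi> x))) \<longlonglongrightarrow> 0"
proof (rule LIMSEQ_I)
  fix r :: real assume "r > 0"
  then obtain e where "e > 0" and small: "\<forall>x\<in>K. dist (\<phi> x) k < e \<longrightarrow> norm (w x) < r / 2"
    using weight_small_near_vanishing_fibre[of K \<phi> w k "r / 2"] assms by auto
  then obtain M where M: "1 / real (Suc M) < e" using nat_approx_posE by blast
  have "norm (supnorm K (\<lambda>x. w x * peak k n (\<phi> x)) - 0) < r" if "M \<le> n" for n
  proof -
    have "1 / real (Suc n) \<le> 1 / real (Suc M)"
      using that by (simp add: frac_le)
    with M have "1 / real (Suc n) < e" by linarith
    have pointwise: "norm (w x * peak k n (\<phi> x)) \<le> r / 2" if "x \<in> K" for x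
    proof (cases "dist (\<phi> x) k < e")
      case True
      then have "norm (w x) \<le> r / 2" using small that by fastforce
      then have "norm (w x) * norm (peak k n (\<phi> x)) \<le> r / 2 * 1"
        using \<open>r > 0\<close> by (intro mult_mono) (simp_all add: norm_peak_le_one)
      then show ?thesis by (simp add: norm_mult)
    next
      case False
      then have "peak k n (\<phi> x) = 0"
        using \<open>1 / real (Suc n) < e\<close> by (intro peak_eq_zero) simp
      then show ?thesis using \<open>r > 0\<close> by simp
    qed
    have "supnorm K (\<lambda>x. w x * peak k n (\<phi> x)) \<le> r / 2"
      using pointwise \<open>r > 0\<close> by (intro supnorm_least) auto
    moreover have "0 \<le> supnorm K (\<lambda>x. w x * peak k n (\<phi> x))"
      using pointwise by (intro supnorm_nonneg bdd_aboveI2[where M = "r / 2"]) auto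
    ultimately show ?thesis using \<open>r > 0\<close> by simp
  qed
  then show "\<exists>M. \<forall>n\<ge>M. norm (supnorm K (\<lambda>x. w x * peak k n (\<phi> x)) - 0) < r" by blast
qed

theorem lemma2:
  fixes K :: "'a::metric_space set" and \<phi> :: "'a \<Rightarrow> 'a" and w :: "'a \<Rightarrow> complex"
  assumes "compact K"
    and "continuous_on K \<phi>" and "\<phi> ` K = K" and "open_map_on K \<phi>"
    and "continuous_on K w"
  shows "0 \<in> ap_spectrum K (\<lambda>f k. w k * f (\<phi> k))
         \<longleftrightarrow> (\<exists>k\<in>K. \<forall>x\<in>K. \<phi> x = k \<longrightarrow> w x = 0)"
proof
  assume ap: "0 \<in> ap_spectrum K (\<lambda>f k. w k * f (\<phi> k))"
  show "\<exists>k\<in>K. \<forall>x\<in>K. \<phi> x = k \<longrightarrow> w x = 0"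
  proof (rule ccontr)
    assume "\<not> ?thesis"
    then have "\<forall>y\<in>K. \<exists>x\<in>K. \<phi> x = y \<and> 0 < norm (w x)" by auto
    then obtain \<delta> where "\<delta> > 0" "\<forall>y\<in>K. \<exists>x\<in>K. \<phi> x = y \<and> \<delta> < norm (w x)"
      using open_map_fibrewise_lower_bound[OF assms(1,4) continuous_on_norm[OF assms(5)]] by blast
    then have "0 \<notin> ap_spectrum K (\<lambda>f k. w k * f (\<phi> k))"
      using weighted_composition_bounded_below[OF assms(1,2) _ assms(5)] assms(3)
      by (intro zero_notin_ap_spectrum_if_bounded_below) auto
    with ap show False by contradiction
  qed
next
  assume "\<exists>k\<in>K. \<forall>x\<in>K. \<phi> x = k \<longrightarrow> w x = 0"
  then obtain k where "k \<in> K" "\<forall>x\<in>K. \<phi> x = k \<longrightarrow> w x = 0" by blast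
  then show "0 \<in> ap_spectrum K (\<lambda>f k. w k * f (\<phi> k))"
    using weighted_composition_peak_tendsto_zero[OF assms(1,2,5)] continuous_on_peak supnorm_peak
    unfolding ap_spectrum_def by (intro CollectI exI[of _ "peak k"]) auto
qed

end
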